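(* Let $\Gamma$ be a finite simplicial graph and let $v_1,v_2,v_3$ be three consecutive vertices of a path in $\Gamma$ with $d(v_1,v_3)=2$. Let $f$ be a conjugating automorphism of $A_\Gamma$ with $f(v_1)=v_1$. Then $f(v_2)$ is represented by a reduced word $wv_2w^{-1}$ with $w\in\langle\mathrm{lk}(v_1)\rangle$, and $f(v_3)$ is represented by a reduced word $xyv_3y^{-1}x^{-1}$ with $x\in\langle\mathrm{lk}(v_1)\rangle$ and $y\in\langle\mathrm{st}(v_2)\rangle$.
   Context: $A_\Gamma$ is the right-angled Artin group with generators $V\Gamma$ and relations $[a,b]=1$ for edges $\{a,b\}$. $\mathrm{lk}(v)$ is the subgraph induced by the neighbours of $v$, $\mathrm{st}(v)$ that induced by $\mathrm{lk}(v)\cup\{v\}$, and for a subgraph $S$, $\langle S\rangle$ is the subgroup generated by its vertices. A word is reduced if it has minimal length among words representing the same element. An automorphism is conjugating if it maps each vertex generator to a conjugate of itself. *)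

theory Defs
  imports "HOL-Algebra.Algebra"
begin

definition simplicial_graph :: "'v set \<Rightarrow> ('v \<Rightarrow> 'v \<Rightarrow> bool) \<Rightarrow> bool" where
  "simplicial_graph V E \<longleftrightarrow> finite V \<and> (\<forall>a b. E a b \<longrightarrow> a \<in> V \<and> b \<in> V \<and> a \<noteq> b \<and> E b a)"

definition walk :: "('v \<Rightarrow> 'v \<Rightarrow> bool) \<Rightarrow> 'v list \<Rightarrow> bool" where
  "walk E p \<longleftrightarrow> p \<noteq> [] \<and> (\<forall>i. Suc i < length p \<longrightarrow> E (p ! i) (p ! Suc i))"

text \<open>Combinatorial graph distance (number of edges of a shortest walk); only meaningful
for vertices of V joined by some walk.\<close>
definition graph_dist :: "'v set \<Rightarrow> ('v \<Rightarrow> 'v \<Rightarrow> bool) \<Rightarrow> 'v \<Rightarrow> 'v \<Rightarrow> nat" where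
  "graph_dist V E u v = (LEAST n. \<exists>p. walk E p \<and> set p \<subseteq> V \<and> hd p = u \<and> last p = v \<and> length p = Suc n)"

definition lk :: "'v set \<Rightarrow> ('v \<Rightarrow> 'v \<Rightarrow> bool) \<Rightarrow> 'v \<Rightarrow> 'v set" where
  "lk V E v = {u \<in> V. E v u}"

definition st :: "'v set \<Rightarrow> ('v \<Rightarrow> 'v \<Rightarrow> bool) \<Rightarrow> 'v \<Rightarrow> 'v set" where
  "st V E v = insert v (lk V E v)"

text \<open>Words: lists of letters (vertex, sign); sign True means v, False means v^-1.\<close>
type_synonym 'v word = "('v \<times> bool) list"

definition words :: "'v set \<Rightarrow> 'v word set" where
  "words V = lists (V \<times> UNIV)"

definition word_inv :: "'v word \<Rightarrow> 'v word" where
  "word_inv w = rev (map (\<lambda>(a, s). (a, \<not> s)) w)"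

inductive raag_step :: "('v \<Rightarrow> 'v \<Rightarrow> bool) \<Rightarrow> 'v word \<Rightarrow> 'v word \<Rightarrow> bool" for E where
  cancel: "raag_step E (xs @ [(a, s), (a, \<not> s)] @ ys) (xs @ ys)"
| commute: "E a b \<Longrightarrow> raag_step E (xs @ [(a, s), (b, t)] @ ys) (xs @ [(b, t), (a, s)] @ ys)"

definition raag_rel :: "'v set \<Rightarrow> ('v \<Rightarrow> 'v \<Rightarrow> bool) \<Rightarrow> ('v word \<times> 'v word) set" where
  "raag_rel V E = {(u, w). u \<in> words V \<and> w \<in> words V \<and> equivclp (raag_step E) u w}"

definition raag_class :: "'v set \<Rightarrow> ('v \<Rightarrow> 'v \<Rightarrow> bool) \<Rightarrow> 'v word \<Rightarrow> 'v word set" where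
  "raag_class V E w = raag_rel V E `` {w}"

definition RAAG :: "'v set \<Rightarrow> ('v \<Rightarrow> 'v \<Rightarrow> bool) \<Rightarrow> 'v word set monoid" where
  "RAAG V E = \<lparr> carrier = words V // raag_rel V E,
                monoid.mult = (\<lambda>A B. raag_class V E ((SOME u. u \<in> A) @ (SOME u. u \<in> B))),
                one = raag_class V E [] \<rparr>"

definition raag_gen :: "'v set \<Rightarrow> ('v \<Rightarrow> 'v \<Rightarrow> bool) \<Rightarrow> 'v \<Rightarrow> 'v word set" where
  "raag_gen V E v = raag_class V E [(v, True)]"

definition reduced :: "'v set \<Rightarrow> ('v \<Rightarrow> 'v \<Rightarrow> bool) \<Rightarrow> 'v word \<Rightarrow> bool" where
  "reduced V E w \<longleftrightarrow> w \<in> words V \<and> (\<forall>u. (w, u) \<in> raag_rel V E \<longrightarrow> length w \<le> length u)"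

definition conjugating_aut :: "'v set \<Rightarrow> ('v \<Rightarrow> 'v \<Rightarrow> bool) \<Rightarrow> ('v word set \<Rightarrow> 'v word set) \<Rightarrow> bool" where
  "conjugating_aut V E f \<longleftrightarrow> f \<in> iso (RAAG V E) (RAAG V E) \<and>
     (\<forall>v \<in> V. \<exists>g \<in> carrier (RAAG V E).
        f (raag_gen V E v) = g \<otimes>\<^bsub>RAAG V E\<^esub> raag_gen V E v \<otimes>\<^bsub>RAAG V E\<^esub> inv\<^bsub>RAAG V E\<^esub> g)"

end

(* A cancel pair of a word is a letter x and a later x^-1 such that every letter between them
   commutes with x; deleting such pairs is confluent up to swapping adjacent commuting letters,
   so cancel-free words are reduced.  A conjugate u l u^-1 of a letter becomes cancel-free after
   deleting letters of u.  If a generator a commutes with a cancel-free u l u^-1, the single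
   cancellation in a (u l u^-1) a^-1 shows that every letter of u is adjacent to a.

   Since f(v2) commutes with f(v1) = v1, this gives f(v2) = w v2 w^-1 with w in lk(v1).
   Conjugating f(v3) by w^-1 yields an element commuting with v2, hence of the form
   y v3 y^-1 with y in lk(v2); normalising w y v3 y^-1 w^-1 only deletes letters, which
   keeps the two factors in lk(v1) and lk(v2). *)

theory Submission
  imports Defs "HOL-Library.Sublist"
begin

abbreviation raag_equiv :: "('v \<Rightarrow> 'v \<Rightarrow> bool) \<Rightarrow> 'v word \<Rightarrow> 'v word \<Rightarrow> bool" where
  "raag_equiv E \<equiv> equivclp (raag_step E)"

lemma raag_step_in_context:
  assumes "raag_step E u w" shows "raag_step E (p @ u @ q) (p @ w @ q)"
  using assms
proof cases
  case (cancel xs a s ys)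
  then show ?thesis using raag_step.cancel[of E "p @ xs" a s "ys @ q"] by simp
next
  case (commute a b xs s t ys)
  then show ?thesis using raag_step.commute[of E a b "p @ xs" s t "ys @ q"] by simp
qed

lemma raag_equiv_in_context: "raag_equiv E u w \<Longrightarrow> raag_equiv E (p @ u @ q) (p @ w @ q)"
proof (induction rule: equivclp_induct)
  case (step y z)
  then show ?case by (meson equivclp_into_equivclp raag_step_in_context)
qed simp

lemma raag_equiv_append:
  "raag_equiv E u u' \<Longrightarrow> raag_equiv E w w' \<Longrightarrow> raag_equiv E (u @ w) (u' @ w')"
  using raag_equiv_in_context[of E u u' "[]" w] raag_equiv_in_context[of E w w' u' "[]"]
  by (auto intro: equivclp_trans)

lemma raag_equiv_cancel: "raag_equiv E (p @ [(a, s), (a, \<not> s)] @ q) (p @ q)"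
  by (rule r_into_equivclp, rule raag_step.cancel)

lemma raag_equiv_commute: "E a b \<Longrightarrow> raag_equiv E (p @ [(a, s), (b, t)] @ q) (p @ [(b, t), (a, s)] @ q)"
  by (rule r_into_equivclp, rule raag_step.commute)

lemma word_inv_Nil [simp]: "word_inv [] = []"
  by (simp add: word_inv_def)

lemma word_inv_append [simp]: "word_inv (u @ w) = word_inv w @ word_inv u"
  by (simp add: word_inv_def)

lemma word_inv_Cons: "word_inv ((a, s) # w) = word_inv w @ [(a, \<not> s)]"
  by (simp add: word_inv_def)

lemma word_inv_word_inv [simp]: "word_inv (word_inv w) = w"
  by (induction w) (auto simp: word_inv_def)

lemma length_word_inv [simp]: "length (word_inv w) = length w"
  by (simp add: word_inv_def)

lemma word_inv_single [simp]: "word_inv [(a, s)] = [(a, \<not> s)]"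
  by (simp add: word_inv_def)

lemma word_inv_single_eq: "word_inv [x] = [(a, s)] \<longleftrightarrow> x = (a, \<not> s)"
  by (cases x) auto

lemma in_set_word_inv: "(a, s) \<in> set (word_inv u) \<longleftrightarrow> (a, \<not> s) \<in> set u"
  by (force simp: word_inv_def image_iff)

lemma fst_set_word_inv [simp]: "fst ` set (word_inv u) = fst ` set u"
  by (force simp: word_inv_def image_iff)

lemma words_iff: "w \<in> words V \<longleftrightarrow> fst ` set w \<subseteq> V"
  by (auto simp: words_def)

lemma words_append [simp]: "u @ w \<in> words V \<longleftrightarrow> u \<in> words V \<and> w \<in> words V"
  by (auto simp: words_def)

lemma words_Cons [simp]: "(a, s) # w \<in> words V \<longleftrightarrow> a \<in> V \<and> w \<in> words V"
  by (auto simp: words_def)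

lemma words_Nil [simp]: "[] \<in> words V"
  by (simp add: words_def)

lemma words_word_inv [simp]: "word_inv w \<in> words V \<longleftrightarrow> w \<in> words V"
  by (simp add: words_iff)

lemma raag_equiv_inv_right: "raag_equiv E (w @ word_inv w) []"
proof (induction w)
  case (Cons x w)
  obtain a s where x: "x = (a, s)" by (cases x)
  have "raag_equiv E ([x] @ (w @ word_inv w) @ [(a, \<not> s)]) ([x] @ [] @ [(a, \<not> s)])"
    using raag_equiv_in_context[OF Cons] .
  then show ?case
    using raag_equiv_cancel[of E "[]" a s "[]"] x by (auto simp: word_inv_Cons intro: equivclp_trans)
qed simp

lemma raag_equiv_inv_left: "raag_equiv E (word_inv w @ w) []"
  using raag_equiv_inv_right[of E "word_inv w"] by simp

lemma raag_step_word_inv: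
  assumes "raag_step E u w" and sym: "\<And>a b. E a b \<Longrightarrow> E b a"
  shows "raag_step E (word_inv u) (word_inv w)"
  using assms(1)
proof cases
  case (cancel xs a s ys)
  then show ?thesis using raag_step.cancel[of E "word_inv ys" a s "word_inv xs"]
    by (simp add: word_inv_def)
next
  case (commute a b xs s t ys)
  then show ?thesis using raag_step.commute[of E b a "word_inv ys" "\<not> t" "\<not> s" "word_inv xs"] sym
    by (simp add: word_inv_def)
qed

lemma raag_equiv_word_inv:
  assumes "raag_equiv E u w" and "\<And>a b. E a b \<Longrightarrow> E b a"
  shows "raag_equiv E (word_inv u) (word_inv w)"
  using assms(1)
proof (induction rule: equivclp_induct)
  case (step y z)
  then show ?case by (meson assms(2) equivclp_into_equivclp raag_step_word_inv)
qed simp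

lemma raag_equiv_commute_cong:
  assumes "raag_equiv E P P'" "raag_equiv E Q Q'" "raag_equiv E (P @ Q) (Q @ P)"
  shows "raag_equiv E (P' @ Q') (Q' @ P')"
  using raag_equiv_append[OF assms(1,2)] raag_equiv_append[OF assms(2,1)] assms(3)
  by (meson equivclp_sym equivclp_trans)

lemma raag_equiv_conj_commute:
  assumes "raag_equiv E (A @ B) (B @ A)"
  shows "raag_equiv E ((word_inv c @ A @ c) @ (word_inv c @ B @ c)) ((word_inv c @ B @ c) @ (word_inv c @ A @ c))"
proof -
  have cancel: "raag_equiv E ((word_inv c @ P @ c) @ (word_inv c @ Q @ c)) (word_inv c @ (P @ Q) @ c)" for P Q
    using raag_equiv_in_context[OF raag_equiv_inv_right[of E c], of "word_inv c @ P" "Q @ c"] by simp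
  show ?thesis
    using cancel[of A B] cancel[of B A] raag_equiv_in_context[OF assms, of "word_inv c" c]
    by (meson equivclp_sym equivclp_trans)
qed

lemma raag_equiv_conj_cancel: "raag_equiv E (word_inv c @ (c @ P @ word_inv c) @ c) P"
  using raag_equiv_in_context[OF raag_equiv_inv_left[of E c], of "[]" "P @ word_inv c @ c"]
    raag_equiv_in_context[OF raag_equiv_inv_left[of E c], of P "[]"]
  by (simp add: equivclp_trans)

lemma raag_equiv_commute_unconjugate:
  assumes "raag_equiv E ((u @ P @ word_inv u) @ Q) (Q @ u @ P @ word_inv u)"
  shows "raag_equiv E (P @ word_inv u @ Q @ u) ((word_inv u @ Q @ u) @ P)"
  using raag_equiv_commute_cong[OF raag_equiv_conj_cancel equivclp_refl raag_equiv_conj_commute[OF assms]]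
  by simp

lemma mem_raag_class: "u \<in> raag_class V E w \<longleftrightarrow> u \<in> words V \<and> w \<in> words V \<and> raag_equiv E w u"
  by (auto simp: raag_class_def raag_rel_def)

lemma raag_class_eq_iff:
  assumes "u \<in> words V" "w \<in> words V"
  shows "raag_class V E u = raag_class V E w \<longleftrightarrow> raag_equiv E u w"
proof
  assume "raag_class V E u = raag_class V E w"
  then show "raag_equiv E u w"
    using assms by (metis mem_raag_class equivclp_refl)
next
  assume "raag_equiv E u w"
  then have "raag_equiv E u x \<longleftrightarrow> raag_equiv E w x" for x
    by (meson equivclp_sym equivclp_trans)
  then show "raag_class V E u = raag_class V E w"
    using assms by (auto simp: mem_raag_class)
qed

lemma carrier_RAAG: "x \<in> carrier (RAAG V E) \<longleftrightarrow> (\<exists>w\<in>words V. x = raag_class V E w)"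
  unfolding RAAG_def quotient_def raag_class_def by simp

lemma raag_class_in_carrier: "w \<in> words V \<Longrightarrow> raag_class V E w \<in> carrier (RAAG V E)"
  by (auto simp: carrier_RAAG)

lemma one_RAAG: "\<one>\<^bsub>RAAG V E\<^esub> = raag_class V E []"
  by (simp add: RAAG_def)

lemma raag_class_mult:
  assumes u: "u \<in> words V" and w: "w \<in> words V"
  shows "raag_class V E u \<otimes>\<^bsub>RAAG V E\<^esub> raag_class V E w = raag_class V E (u @ w)"
proof -
  let ?u = "SOME x. x \<in> raag_class V E u" and ?w = "SOME x. x \<in> raag_class V E w"
  have "u \<in> raag_class V E u" "w \<in> raag_class V E w"
    using u w by (simp_all add: mem_raag_class)
  then have "?u \<in> raag_class V E u" "?w \<in> raag_class V E w"
    by (metis someI)+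
  then have "raag_class V E (?u @ ?w) = raag_class V E (u @ w)"
    using u w by (subst raag_class_eq_iff) (auto intro: equivclp_sym raag_equiv_append simp: mem_raag_class)
  then show ?thesis by (simp add: RAAG_def)
qed

lemma monoid_RAAG: "monoid (RAAG V E)"
  by (rule monoidI) (auto simp: carrier_RAAG raag_class_mult one_RAAG)

lemma raag_class_inv:
  assumes "w \<in> words V"
  shows "inv\<^bsub>RAAG V E\<^esub> (raag_class V E w) = raag_class V E (word_inv w)"
  using assms
  by (intro monoid.inv_unique'[OF monoid_RAAG, symmetric])
    (simp_all add: raag_class_in_carrier raag_class_mult one_RAAG raag_class_eq_iff
      raag_equiv_inv_right raag_equiv_inv_left)

lemma raag_class_in_generate:
  assumes "fst ` set w \<subseteq> S" "S \<subseteq> V"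
  shows "raag_class V E w \<in> generate (RAAG V E) (raag_gen V E ` S)"
  using assms(1)
proof (induction w)
  case Nil
  then show ?case using generate.one[of "RAAG V E"] by (simp add: one_RAAG)
next
  case (Cons x w)
  obtain a s where x: "x = (a, s)" by (cases x)
  have a: "a \<in> S" "a \<in> V" and wV: "w \<in> words V"
    using Cons.prems x assms(2) by (auto simp: words_iff)
  have "raag_class V E [(a, True)] \<in> generate (RAAG V E) (raag_gen V E ` S)"
    using a by (auto simp: raag_gen_def intro!: generate.incl)
  then have "raag_class V E [x] \<in> generate (RAAG V E) (raag_gen V E ` S)"
    using generate.inv[of "raag_gen V E a" "raag_gen V E ` S" "RAAG V E"] a x
    by (cases s) (auto simp: raag_gen_def raag_class_inv)
  then have "raag_class V E [x] \<otimes>\<^bsub>RAAG V E\<^esub> raag_class V E w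
      \<in> generate (RAAG V E) (raag_gen V E ` S)"
    using Cons by (auto intro: generate.eng)
  then show ?case using wV a x by (simp add: raag_class_mult)
qed

lemma conjugating_aut_gen:
  assumes "conjugating_aut V E f" "v \<in> V"
  obtains g where "g \<in> words V" "f (raag_gen V E v) = raag_class V E (g @ [(v, True)] @ word_inv g)"
proof -
  obtain G where G: "G \<in> carrier (RAAG V E)"
    and fG: "f (raag_gen V E v) = G \<otimes>\<^bsub>RAAG V E\<^esub> raag_gen V E v \<otimes>\<^bsub>RAAG V E\<^esub> inv\<^bsub>RAAG V E\<^esub> G"
    using assms unfolding conjugating_aut_def by blast
  obtain g where g: "g \<in> words V" and Gg: "G = raag_class V E g"
    using G by (auto simp: carrier_RAAG)
  have "G \<otimes>\<^bsub>RAAG V E\<^esub> raag_gen V E v \<otimes>\<^bsub>RAAG V E\<^esub> inv\<^bsub>RAAG V E\<^esub> G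
      = raag_class V E ((g @ [(v, True)]) @ word_inv g)"
    unfolding Gg raag_gen_def using g assms(2)
    by (simp add: raag_class_inv raag_class_mult del: append_assoc)
  then show ?thesis using that g fG by simp
qed

lemma conjugating_aut_adjacent_commute:
  assumes f: "conjugating_aut V E f" and ab: "E a b" "a \<in> V" "b \<in> V"
    and A: "A \<in> words V" "f (raag_gen V E a) = raag_class V E A"
    and B: "B \<in> words V" "f (raag_gen V E b) = raag_class V E B"
  shows "raag_equiv E (A @ B) (B @ A)"
proof -
  have hom: "f \<in> hom (RAAG V E) (RAAG V E)"
    using f unfolding conjugating_aut_def iso_def by blast
  have gens: "raag_gen V E a \<in> carrier (RAAG V E)" "raag_gen V E b \<in> carrier (RAAG V E)"
    using ab by (simp_all add: raag_gen_def raag_class_in_carrier)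
  have "raag_gen V E a \<otimes>\<^bsub>RAAG V E\<^esub> raag_gen V E b = raag_gen V E b \<otimes>\<^bsub>RAAG V E\<^esub> raag_gen V E a"
    using ab raag_equiv_commute[of E a b "[]" True True "[]"]
    by (simp add: raag_gen_def raag_class_mult raag_class_eq_iff)
  then have "f (raag_gen V E a) \<otimes>\<^bsub>RAAG V E\<^esub> f (raag_gen V E b)
           = f (raag_gen V E b) \<otimes>\<^bsub>RAAG V E\<^esub> f (raag_gen V E a)"
    using hom_mult[OF hom gens] hom_mult[OF hom gens(2,1)] by simp
  then show ?thesis using A B by (simp add: raag_class_mult raag_class_eq_iff)
qed

section \<open>Cancellation normal forms\<close>

definition swap_step :: "('v \<Rightarrow> 'v \<Rightarrow> bool) \<Rightarrow> 'v word \<Rightarrow> 'v word \<Rightarrow> bool" where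
  "swap_step E u w \<longleftrightarrow>
     (\<exists>k. Suc k < length u \<and> E (fst (u ! k)) (fst (u ! Suc k)) \<and> w = u[k := u ! Suc k, Suc k := u ! k])"

definition cancel_pair :: "('v \<Rightarrow> 'v \<Rightarrow> bool) \<Rightarrow> 'v word \<Rightarrow> nat \<Rightarrow> nat \<Rightarrow> bool" where
  "cancel_pair E w i j \<longleftrightarrow> i < j \<and> j < length w \<and>
     fst (w ! j) = fst (w ! i) \<and> snd (w ! j) = (\<not> snd (w ! i)) \<and>
     (\<forall>k. i < k \<longrightarrow> k < j \<longrightarrow> E (fst (w ! i)) (fst (w ! k)))"

definition del_pair :: "'a list \<Rightarrow> nat \<Rightarrow> nat \<Rightarrow> 'a list" where
  "del_pair w i j = take i w @ take (j - Suc i) (drop (Suc i) w) @ drop (Suc j) w"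

definition cancel_step :: "('v \<Rightarrow> 'v \<Rightarrow> bool) \<Rightarrow> 'v word \<Rightarrow> 'v word \<Rightarrow> bool" where
  "cancel_step E w w' \<longleftrightarrow> (\<exists>i j. cancel_pair E w i j \<and> w' = del_pair w i j)"

definition cancel_free :: "('v \<Rightarrow> 'v \<Rightarrow> bool) \<Rightarrow> 'v word \<Rightarrow> bool" where
  "cancel_free E w \<longleftrightarrow> \<not> (\<exists>i j. cancel_pair E w i j)"

text \<open>Position in \<open>w\<close> of the \<open>n\<close>-th letter of \<open>del_pair w i j\<close>, and conversely.\<close>

definition undel_index :: "nat \<Rightarrow> nat \<Rightarrow> nat \<Rightarrow> nat" where
  "undel_index i j n = (if n < i then n else if Suc n < j then Suc n else Suc (Suc n))"

definition del_index :: "nat \<Rightarrow> nat \<Rightarrow> nat \<Rightarrow> nat" where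
  "del_index i j p = p - (if i < p then 1 else 0) - (if j < p then 1 else 0)"

lemma length_del_pair: "i < j \<Longrightarrow> j < length w \<Longrightarrow> length (del_pair w i j) = length w - 2"
  by (simp add: del_pair_def)

lemma nth_del_pair:
  "i < j \<Longrightarrow> j < length w \<Longrightarrow> n < length w - 2 \<Longrightarrow> del_pair w i j ! n = w ! undel_index i j n"
  by (auto simp: del_pair_def undel_index_def nth_append min_def)

lemma undel_del_index: "i < j \<Longrightarrow> p \<noteq> i \<Longrightarrow> p \<noteq> j \<Longrightarrow> undel_index i j (del_index i j p) = p"
  unfolding undel_index_def del_index_def by (simp split: if_split if_split_asm; arith)

lemma del_index_less:
  "i < j \<Longrightarrow> j < len \<Longrightarrow> p < len \<Longrightarrow> p \<noteq> i \<Longrightarrow> p \<noteq> j \<Longrightarrow> del_index i j p < len - 2"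
  unfolding del_index_def by (simp split: if_split if_split_asm; arith)

lemma undel_index_less: "i < j \<Longrightarrow> j < len \<Longrightarrow> n < len - 2 \<Longrightarrow> undel_index i j n < len"
  unfolding undel_index_def by (simp split: if_split if_split_asm; arith)

lemma less_undel_index:
  "i < j \<Longrightarrow> k \<noteq> i \<Longrightarrow> k \<noteq> j \<Longrightarrow> del_index i j k < n \<Longrightarrow> k < undel_index i j n"
  unfolding undel_index_def del_index_def by (simp split: if_split if_split_asm; arith)

lemma undel_index_less_del:
  "i < j \<Longrightarrow> k \<noteq> i \<Longrightarrow> k \<noteq> j \<Longrightarrow> n < del_index i j k \<Longrightarrow> undel_index i j n < k"
  unfolding undel_index_def del_index_def by (simp split: if_split if_split_asm; arith)

lemma del_index_mono:
  "i < j \<Longrightarrow> k \<noteq> i \<Longrightarrow> k \<noteq> j \<Longrightarrow> l \<noteq> i \<Longrightarrow> l \<noteq> j \<Longrightarrow> k < l \<Longrightarrow> del_index i j k < del_index i j l"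
  unfolding del_index_def by (simp split: if_split if_split_asm; arith)

lemma undel_index_commute:
  assumes "i < j" "k < l" "k \<noteq> i" "k \<noteq> j" "l \<noteq> i" "l \<noteq> j"
  shows "undel_index i j (undel_index (del_index i j k) (del_index i j l) n)
       = undel_index k l (undel_index (del_index k l i) (del_index k l j) n)"
proof -
  consider "j < k" | "i < k" "k < j" "j < l" | "i < k" "l < j" | "l < i" | "k < i" "i < l" "l < j"
    | "k < i" "j < l"
    using assms by linarith
  then show ?thesis
  proof cases
    case 1
    then have "del_index i j k = k - 2" "del_index i j l = l - 2" "del_index k l i = i" "del_index k l j = j"
      using assms by (auto simp: del_index_def)
    then show ?thesis using assms(1,2) 1 unfolding undel_index_def by (simp split: if_split; arith)
  next
    case 2
    then have "del_index i j k = k - 1" "del_index i j l = l - 2" "del_index k l i = i" "del_index k l j = j - 1"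
      using assms by (auto simp: del_index_def)
    then show ?thesis using assms(1,2) 2 unfolding undel_index_def by (simp split: if_split; arith)
  next
    case 3
    then have "del_index i j k = k - 1" "del_index i j l = l - 1" "del_index k l i = i" "del_index k l j = j - 2"
      using assms by (auto simp: del_index_def)
    then show ?thesis using assms(1,2) 3 unfolding undel_index_def by (simp split: if_split; arith)
  next
    case 4
    then have "del_index i j k = k" "del_index i j l = l" "del_index k l i = i - 2" "del_index k l j = j - 2"
      using assms by (auto simp: del_index_def)
    then show ?thesis using assms(1,2) 4 unfolding undel_index_def by (simp split: if_split; arith)
  next
    case 5
    then have "del_index i j k = k" "del_index i j l = l - 1" "del_index k l i = i - 1" "del_index k l j = j - 2"
      using assms by (auto simp: del_index_def)
    then show ?thesis using assms(1,2) 5 unfolding undel_index_def by (simp split: if_split; arith)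
  next
    case 6
    then have "del_index i j k = k" "del_index i j l = l - 2" "del_index k l i = i - 1" "del_index k l j = j - 1"
      using assms by (auto simp: del_index_def)
    then show ?thesis using assms(1,2) 6 unfolding undel_index_def by (simp split: if_split; arith)
  qed
qed

locale simple_graph =
  fixes E :: "'v \<Rightarrow> 'v \<Rightarrow> bool"
  assumes irrefl: "\<not> E a a" and sym: "E a b \<Longrightarrow> E b a"
begin

abbreviation swap_equiv :: "'v word \<Rightarrow> 'v word \<Rightarrow> bool" where
  "swap_equiv \<equiv> (swap_step E)\<^sup>*\<^sup>*"

lemma nth_swap_adjacent:
  "Suc k < length u \<Longrightarrow>
   u[k := u ! Suc k, Suc k := u ! k] ! n = (if n = k then u ! Suc k else if n = Suc k then u ! k else u ! n)"
  by (auto simp: nth_list_update)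

lemma swap_stepI: "E (fst x) (fst y) \<Longrightarrow> swap_step E (p @ [x, y] @ q) (p @ [y, x] @ q)"
  unfolding swap_step_def
  by (auto intro!: exI[of _ "length p"] simp: nth_append list_update_append)

lemma swap_stepE:
  assumes "swap_step E u w"
  obtains p x y q where "u = p @ [x, y] @ q" "w = p @ [y, x] @ q" "E (fst x) (fst y)"
proof -
  obtain k where k: "Suc k < length u" "E (fst (u ! k)) (fst (u ! Suc k))"
    and w: "w = u[k := u ! Suc k, Suc k := u ! k]"
    using assms by (auto simp: swap_step_def)
  have u: "u = take k u @ [u ! k, u ! Suc k] @ drop (Suc (Suc k)) u"
    using id_take_nth_drop[of k u] Cons_nth_drop_Suc[OF k(1)] k(1) by simp
  have "w = (take k u @ [u ! k, u ! Suc k] @ drop (Suc (Suc k)) u)[k := u ! Suc k, Suc k := u ! k]"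
    unfolding w using arg_cong[OF u, of "\<lambda>v. v[k := u ! Suc k, Suc k := u ! k]"] .
  also have "\<dots> = take k u @ [u ! Suc k, u ! k] @ drop (Suc (Suc k)) u"
    using k(1) by (simp add: list_update_append)
  finally show ?thesis using that u k(2) by blast
qed

lemma swap_step_sym: "swap_step E u w \<Longrightarrow> swap_step E w u"
  by (metis swap_stepE swap_stepI sym)

lemma swap_step_length: "swap_step E u w \<Longrightarrow> length w = length u"
  by (auto simp: swap_step_def)

lemma swap_equiv_sym: "swap_equiv u w \<Longrightarrow> swap_equiv w u"
  by (induction rule: rtranclp_induct) (auto intro: converse_rtranclp_into_rtranclp swap_step_sym)

lemma swap_equiv_length: "swap_equiv u w \<Longrightarrow> length w = length u"
  by (induction rule: rtranclp_induct) (auto simp: swap_step_length)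

lemma swap_step_del_pair_disjoint:
  assumes k: "Suc k < length u" "E (fst (u ! k)) (fst (u ! Suc k))"
    and ij: "i < j" "j < length u" and d: "k \<noteq> i" "Suc k \<noteq> i" "k \<noteq> j" "Suc k \<noteq> j"
  shows "swap_step E (del_pair u i j) (del_pair (u[k := u ! Suc k, Suc k := u ! k]) i j)"
proof -
  let ?u1 = "u[k := u ! Suc k, Suc k := u ! k]" and ?u2 = "del_pair u i j"
  define k' where "k' = del_index i j k"
  have k': "Suc k' < length ?u2" "undel_index i j k' = k" "undel_index i j (Suc k') = Suc k"
    using d ij k unfolding k'_def del_index_def undel_index_def by (auto simp: length_del_pair)
  have "del_pair ?u1 i j = ?u2[k' := ?u2 ! Suc k', Suc k' := ?u2 ! k']"
  proof (rule nth_equalityI)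
    fix n assume "n < length (del_pair ?u1 i j)"
    then have n: "n < length u - 2" using ij by (simp add: length_del_pair)
    have "undel_index i j n = k \<longleftrightarrow> n = k'" "undel_index i j n = Suc k \<longleftrightarrow> n = Suc k'"
      using d ij unfolding k'_def del_index_def undel_index_def by auto
    then show "del_pair ?u1 i j ! n = ?u2[k' := ?u2 ! Suc k', Suc k' := ?u2 ! k'] ! n"
      using n k' ij k(1) by (auto simp: nth_del_pair nth_swap_adjacent length_del_pair)
  qed (use ij in \<open>simp add: length_del_pair\<close>)
  then show ?thesis
    unfolding swap_step_def using k ij k' by (auto simp: nth_del_pair length_del_pair intro!: exI[of _ k'])
qed

lemma swap_step_del_pair_overlap:
  assumes k: "Suc k < length u" "E (fst (u ! k)) (fst (u ! Suc k))" and ij: "cancel_pair E u i j"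
    and overlap: "k = i \<or> Suc k = i \<or> k = j \<or> Suc k = j"
  defines "u1 \<equiv> u[k := u ! Suc k, Suc k := u ! k]"
  shows "\<exists>i' j'. cancel_pair E u1 i' j' \<and> del_pair u1 i' j' = del_pair u i j"
proof -
  have L: "length u1 = length u" by (simp add: u1_def)
  have n1: "u1 ! n = (if n = k then u ! Suc k else if n = Suc k then u ! k else u ! n)" for n
    using k(1) nth_swap_adjacent unfolding u1_def by metis
  from ij have ij': "i < j" "j < length u" "fst (u ! j) = fst (u ! i)" "snd (u ! j) = (\<not> snd (u ! i))"
    "\<And>m. i < m \<Longrightarrow> m < j \<Longrightarrow> E (fst (u ! i)) (fst (u ! m))"
    by (auto simp: cancel_pair_def)
  consider "k = i" | "Suc k = i" | "k = j" | "Suc k = j" "k \<noteq> i"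
    using overlap by blast
  then show ?thesis
  proof cases
    case 1
    have "Suc k \<noteq> j" using k(2) ij' 1 irrefl by metis
    then have "Suc i < j" using 1 ij' by simp
    have "cancel_pair E u1 (Suc i) j"
      using ij' 1 \<open>Suc i < j\<close> k L unfolding cancel_pair_def n1 by (auto simp: sym)
    moreover have "del_pair u1 (Suc i) j = del_pair u i j"
      using ij' \<open>Suc i < j\<close> L 1
      by (intro nth_equalityI) (auto simp: length_del_pair nth_del_pair n1 undel_index_def)
    ultimately show ?thesis by blast
  next
    case 2
    have "cancel_pair E u1 k j"
      using ij' 2 k L unfolding cancel_pair_def n1 by (auto simp: sym)
    moreover have "del_pair u1 k j = del_pair u i j"
      using ij' L 2
      by (intro nth_equalityI) (auto simp: length_del_pair nth_del_pair n1 undel_index_def less_Suc_eq)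
    ultimately show ?thesis by blast
  next
    case 3
    have "cancel_pair E u1 i (Suc j)"
      using ij' 3 k L unfolding cancel_pair_def n1 by (auto simp: sym)
    moreover have "del_pair u1 i (Suc j) = del_pair u i j"
      using ij' L 3 k
      by (intro nth_equalityI) (auto simp: length_del_pair nth_del_pair n1 undel_index_def)
    ultimately show ?thesis by blast
  next
    case 4
    have "cancel_pair E u1 i k"
      using ij' 4 k L unfolding cancel_pair_def n1 by (auto simp: sym)
    moreover have "del_pair u1 i k = del_pair u i j"
      using ij' L 4 k
      by (intro nth_equalityI) (auto simp: length_del_pair nth_del_pair n1 undel_index_def)
    ultimately show ?thesis by blast
  qed
qed

lemma swap_step_cancel_step:
  assumes "swap_step E u u1" and "cancel_step E u u2"
  shows "\<exists>u2'. cancel_step E u1 u2' \<and> (u2' = u2 \<or> swap_step E u2 u2')"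
proof -
  obtain k where k: "Suc k < length u" "E (fst (u ! k)) (fst (u ! Suc k))"
    and u1: "u1 = u[k := u ! Suc k, Suc k := u ! k]"
    using assms(1) by (auto simp: swap_step_def)
  obtain i j where ij: "cancel_pair E u i j" and u2: "u2 = del_pair u i j"
    using assms(2) by (auto simp: cancel_step_def)
  show ?thesis
  proof (cases "k = i \<or> Suc k = i \<or> k = j \<or> Suc k = j")
    case True
    then show ?thesis
      using swap_step_del_pair_overlap[OF k ij] u1 u2 by (auto simp: cancel_step_def)
  next
    case False
    then have d: "k \<noteq> i" "Suc k \<noteq> i" "k \<noteq> j" "Suc k \<noteq> j" by auto
    have ij': "i < j" "j < length u" using ij by (auto simp: cancel_pair_def)
    have "cancel_pair E u1 i j"
      using ij d k unfolding cancel_pair_def u1 by (auto simp: nth_list_update)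
    moreover have "swap_step E u2 (del_pair u1 i j)"
      unfolding u1 u2 by (rule swap_step_del_pair_disjoint[OF k ij' d])
    ultimately show ?thesis by (auto simp: cancel_step_def)
  qed
qed

lemma swap_equiv_move:
  assumes "\<forall>y\<in>set M. E (fst x) (fst y)"
  shows "swap_equiv (P @ [x] @ M @ Q) (P @ M @ [x] @ Q)"
  using assms
proof (induction M arbitrary: P)
  case (Cons y M)
  have "swap_step E (P @ [x] @ (y # M) @ Q) ((P @ [y]) @ [x] @ M @ Q)"
    using swap_stepI[of x y P "M @ Q"] Cons.prems by simp
  moreover have "swap_equiv ((P @ [y]) @ [x] @ M @ Q) ((P @ [y]) @ M @ [x] @ Q)"
    using Cons.IH[of "P @ [y]"] Cons.prems by simp
  ultimately show ?case by simp
qed simp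

lemma split_at_pair:
  assumes "i < j" "j < length w"
  shows "w = take i w @ [w ! i] @ take (j - Suc i) (drop (Suc i) w) @ [w ! j] @ drop (Suc j) w"
proof -
  have "drop (Suc i) w = take (j - Suc i) (drop (Suc i) w) @ [w ! j] @ drop (Suc j) w"
    using id_take_nth_drop[of "j - Suc i" "drop (Suc i) w"] assms by simp
  then show ?thesis
    using id_take_nth_drop[of i w] assms by simp
qed

lemma cancel_pair_between:
  assumes "cancel_pair E w i j" "y \<in> set (take (j - Suc i) (drop (Suc i) w))"
  shows "E (fst (w ! i)) (fst y)"
proof -
  obtain n where "n < j - Suc i" "Suc i + n < length w" "y = w ! (Suc i + n)"
    using assms(2) by (auto simp: in_set_conv_nth)
  then show ?thesis using assms(1) by (simp add: cancel_pair_def)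
qed

lemma cancel_pair_unique_right: "cancel_pair E w i j \<Longrightarrow> cancel_pair E w i l \<Longrightarrow> j = l"
  unfolding cancel_pair_def by (metis irrefl linorder_neqE_nat)

lemma cancel_pair_unique_left: "cancel_pair E w i j \<Longrightarrow> cancel_pair E w k j \<Longrightarrow> i = k"
  unfolding cancel_pair_def by (metis irrefl linorder_neqE_nat)

text \<open>Two overlapping cancellations \<open>x M x\<^sup>-\<^sup>1 N x\<close> leave the same letters in different order;
  both \<open>M\<close> and \<open>N\<close> commute with \<open>x\<close>.\<close>

lemma cancel_pair_chain:
  assumes c1: "cancel_pair E w i j" and c2: "cancel_pair E w j l"
  shows "swap_equiv (del_pair w j l) (del_pair w i j)"
proof -
  from c1 c2 have a: "i < j" "j < l" "l < length w" by (auto simp: cancel_pair_def)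
  define M1 where "M1 = take (j - Suc i) (drop (Suc i) w)"
  define M2 where "M2 = take (l - Suc j) (drop (Suc j) w)"
  have d1: "w = take i w @ [w ! i] @ M1 @ [w ! j] @ drop (Suc j) w"
    using split_at_pair[of i j w] a M1_def by simp
  have d2: "w = take j w @ [w ! j] @ M2 @ [w ! l] @ drop (Suc l) w"
    using split_at_pair[of j l w] a M2_def by simp
  have dj: "drop (Suc j) w = M2 @ [w ! l] @ drop (Suc l) w"
    using arg_cong[OF d2, of "drop (Suc j)"] a by simp
  have "j - i = Suc (length M1)" using a by (simp add: M1_def)
  then have tj: "take j w = take i w @ [w ! i] @ M1"
    using arg_cong[OF d1, of "take j"] a by simp
  have wl: "w ! l = w ! i" using c1 c2 unfolding cancel_pair_def by (simp add: prod_eq_iff)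
  have "\<forall>y\<in>set (M1 @ M2). E (fst (w ! i)) (fst y)"
    using cancel_pair_between[OF c1] cancel_pair_between[OF c2] c1
    unfolding M1_def M2_def cancel_pair_def by auto
  moreover have "del_pair w i j = take i w @ M1 @ M2 @ [w ! l] @ drop (Suc l) w"
    unfolding del_pair_def M1_def[symmetric] dj by simp
  moreover have "del_pair w j l = take i w @ [w ! i] @ (M1 @ M2) @ drop (Suc l) w"
    unfolding del_pair_def M2_def[symmetric] tj by simp
  ultimately show ?thesis
    using swap_equiv_move[of "M1 @ M2" "w ! i" "take i w" "drop (Suc l) w"] wl by simp
qed

lemma cancel_pair_del_pair:
  assumes c1: "cancel_pair E w i j" and c2: "cancel_pair E w k l"
    and d: "k \<noteq> i" "k \<noteq> j" "l \<noteq> i" "l \<noteq> j"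
  shows "cancel_pair E (del_pair w i j) (del_index i j k) (del_index i j l)"
proof -
  from c1 have ij: "i < j" "j < length w" by (auto simp: cancel_pair_def)
  from c2 have kl: "k < l" "l < length w" by (auto simp: cancel_pair_def)
  have ak: "del_index i j k < length w - 2" "del_index i j l < length w - 2"
    using del_index_less[of i j "length w"] ij kl d by auto
  have nk: "del_pair w i j ! del_index i j k = w ! k" "del_pair w i j ! del_index i j l = w ! l"
    using ak ij d by (auto simp: nth_del_pair undel_del_index)
  have "E (fst (w ! k)) (fst (del_pair w i j ! n))"
    if "del_index i j k < n" "n < del_index i j l" for n
  proof -
    have "k < undel_index i j n" "undel_index i j n < l"
      using less_undel_index[of i j k n] undel_index_less_del[of i j l n] that ij d by auto
    then show ?thesis
      using c2 that ak ij unfolding cancel_pair_def by (simp add: nth_del_pair)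
  qed
  then show ?thesis
    using del_index_mono[of i j k l] ij kl d ak nk c2 by (auto simp: cancel_pair_def length_del_pair)
qed

lemma del_pair_commute:
  assumes ij: "i < j" "j < length w" and kl: "k < l" "l < length w"
    and d: "k \<noteq> i" "k \<noteq> j" "l \<noteq> i" "l \<noteq> j"
  shows "del_pair (del_pair w i j) (del_index i j k) (del_index i j l)
       = del_pair (del_pair w k l) (del_index k l i) (del_index k l j)"
proof -
  have ak: "del_index i j k < del_index i j l" "del_index i j l < length w - 2"
    using del_index_mono[of i j k l] del_index_less[of i j "length w" l] ij kl d by auto
  have ai: "del_index k l i < del_index k l j" "del_index k l j < length w - 2"
    using del_index_mono[of k l i j] del_index_less[of k l "length w" j] ij kl d by auto
  show ?thesis
  proof (rule nth_equalityI)
    fix n assume "n < length (del_pair (del_pair w i j) (del_index i j k) (del_index i j l))"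
    then have n: "n < length w - 2 - 2" using ak ij by (simp add: length_del_pair)
    have "undel_index (del_index i j k) (del_index i j l) n < length w - 2"
      "undel_index (del_index k l i) (del_index k l j) n < length w - 2"
      using undel_index_less ak ai n by blast+
    then show "del_pair (del_pair w i j) (del_index i j k) (del_index i j l) ! n
             = del_pair (del_pair w k l) (del_index k l i) (del_index k l j) ! n"
      using n ak ai ij kl undel_index_commute[of i j k l n] d by (simp add: nth_del_pair length_del_pair)
  qed (use ak ai ij kl in \<open>simp add: length_del_pair\<close>)
qed

lemma cancel_step_local_confluence:
  assumes "cancel_step E w w1" and "cancel_step E w w2"
  shows "w1 = w2 \<or> swap_equiv w1 w2 \<or> swap_equiv w2 w1 \<or> (\<exists>w3. cancel_step E w1 w3 \<and> cancel_step E w2 w3)"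
proof -
  obtain i j where c1: "cancel_pair E w i j" and w1: "w1 = del_pair w i j"
    using assms(1) by (auto simp: cancel_step_def)
  obtain k l where c2: "cancel_pair E w k l" and w2: "w2 = del_pair w k l"
    using assms(2) by (auto simp: cancel_step_def)
  consider "i = k" | "j = l" | "j = k" | "l = i" | "k \<noteq> i" "k \<noteq> j" "l \<noteq> i" "l \<noteq> j"
    by blast
  then show ?thesis
  proof cases
    case 1
    then show ?thesis using cancel_pair_unique_right c1 c2 w1 w2 by blast
  next
    case 2
    then show ?thesis using cancel_pair_unique_left c1 c2 w1 w2 by blast
  next
    case 3
    then show ?thesis using cancel_pair_chain[of w i j l] c1 c2 w1 w2 by simp
  next
    case 4
    then show ?thesis using cancel_pair_chain[of w k l j] c1 c2 w1 w2 by simp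
  next
    case 5
    have "cancel_pair E w1 (del_index i j k) (del_index i j l)"
      using cancel_pair_del_pair[OF c1 c2 5] w1 by simp
    moreover have "cancel_pair E w2 (del_index k l i) (del_index k l j)"
      using cancel_pair_del_pair[OF c2 c1] 5 w2 by auto
    moreover have "del_pair w1 (del_index i j k) (del_index i j l) = del_pair w2 (del_index k l i) (del_index k l j)"
      using del_pair_commute 5 c1 c2 w1 w2 unfolding cancel_pair_def by blast
    ultimately show ?thesis unfolding cancel_step_def by metis
  qed
qed

lemma cancel_pairE:
  assumes "cancel_pair E w i j"
  obtains P x M Q where "w = P @ [x] @ M @ word_inv [x] @ Q" "length P = i"
    "\<forall>y\<in>set M. E (fst x) (fst y)" "del_pair w i j = P @ M @ Q"
proof -
  have ij: "i < j" "j < length w" using assms by (auto simp: cancel_pair_def)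
  have "word_inv [w ! i] = [w ! j]"
    using assms by (simp add: cancel_pair_def prod_eq_iff word_inv_def case_prod_beta)
  then show ?thesis
    using that[of "take i w" "w ! i" "take (j - Suc i) (drop (Suc i) w)" "drop (Suc j) w"]
      split_at_pair[OF ij] cancel_pair_between[OF assms] ij
    by (simp add: del_pair_def)
qed

lemma cancel_pairI:
  assumes "\<forall>y\<in>set M. E (fst x) (fst y)"
  shows "cancel_pair E (P @ [x] @ M @ word_inv [x] @ Q) (length P) (Suc (length P + length M))"
proof -
  obtain a s where x: "x = (a, s)" by (cases x)
  have "E a (fst (M ! (k - Suc (length P))))" if "length P < k" "k < Suc (length P + length M)" for k
    using assms that x by simp
  then show ?thesis using x by (auto simp: cancel_pair_def nth_append)
qed

lemma not_cancel_free:
  "\<forall>y\<in>set M. E (fst x) (fst y) \<Longrightarrow> \<not> cancel_free E (P @ [x] @ M @ word_inv [x] @ Q)"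
  unfolding cancel_free_def using cancel_pairI[of M x P Q] by blast

lemma cancel_step_length: "cancel_step E w w' \<Longrightarrow> length w' = length w - 2 \<and> 2 \<le> length w"
  by (auto simp: cancel_step_def cancel_pair_def length_del_pair)

lemma cancel_steps_length: "(cancel_step E)\<^sup>*\<^sup>* w z \<Longrightarrow> z = w \<or> length z < length w"
  by (induction rule: rtranclp_induct) (auto dest: cancel_step_length)

lemma cancel_free_iff: "cancel_free E w \<longleftrightarrow> \<not> (\<exists>w'. cancel_step E w w')"
  by (auto simp: cancel_free_def cancel_step_def)

lemma swap_equiv_cancel_free: "swap_equiv w w' \<Longrightarrow> cancel_free E w \<Longrightarrow> cancel_free E w'"
proof (induction rule: rtranclp_induct)
  case (step y z)
  show ?case
    unfolding cancel_free_iff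
  proof
    assume "\<exists>z'. cancel_step E z z'"
    then obtain z' where "cancel_step E z z'" by blast
    from swap_step_cancel_step[OF swap_step_sym[OF step.hyps(2)] this] step.IH step.prems
    show False by (auto simp: cancel_free_iff)
  qed
qed simp

lemma swap_equiv_cancel_step:
  "swap_equiv w w' \<Longrightarrow> cancel_step E w w1 \<Longrightarrow> \<exists>w1'. cancel_step E w' w1' \<and> swap_equiv w1 w1'"
proof (induction arbitrary: w1 rule: rtranclp_induct)
  case (step y z)
  then obtain y1 where y1: "cancel_step E y y1" "swap_equiv w1 y1" by blast
  then show ?case
    using swap_step_cancel_step[OF step.hyps(2) y1(1)] by (meson rtranclp.rtrancl_into_rtrancl)
qed blast

definition cancel_nf :: "'v word \<Rightarrow> 'v word \<Rightarrow> bool" where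
  "cancel_nf w z \<longleftrightarrow> (cancel_step E)\<^sup>*\<^sup>* w z \<and> cancel_free E z"

lemma ex_cancel_nf: "\<exists>z. cancel_nf w z"
proof (induction "length w" arbitrary: w rule: less_induct)
  case less
  show ?case
  proof (cases "cancel_free E w")
    case False
    then obtain w1 where w1: "cancel_step E w w1" by (auto simp: cancel_free_iff)
    have "length w1 < length w" using cancel_step_length[OF w1] by linarith
    then obtain z where "cancel_nf w1 z" using less.hyps by blast
    then show ?thesis
      using w1 unfolding cancel_nf_def by (meson converse_rtranclp_into_rtranclp)
  qed (auto simp: cancel_nf_def)
qed

lemma cancel_nf_of_cancel_free:
  assumes "cancel_free E w" shows "cancel_nf w z \<longleftrightarrow> z = w"
proof
  assume "cancel_nf w z"
  then have "(cancel_step E)\<^sup>*\<^sup>* w z" by (simp add: cancel_nf_def)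
  then show "z = w" using assms by (cases rule: converse_rtranclpE) (auto simp: cancel_free_iff)
qed (use assms in \<open>simp add: cancel_nf_def\<close>)

lemma cancel_nf_cancel_step: "cancel_step E w w1 \<Longrightarrow> cancel_nf w1 z \<Longrightarrow> cancel_nf w z"
  unfolding cancel_nf_def by (meson converse_rtranclp_into_rtranclp)

lemma cancel_nf_first_step:
  assumes "cancel_nf w z" "\<not> cancel_free E w"
  shows "\<exists>w1. cancel_step E w w1 \<and> cancel_nf w1 z"
proof -
  have "(cancel_step E)\<^sup>*\<^sup>* w z" "cancel_free E z" using assms(1) by (simp_all add: cancel_nf_def)
  then show ?thesis
    using assms(2) by (cases rule: converse_rtranclpE) (auto simp: cancel_nf_def)
qed

text \<open>Newman's lemma modulo swaps, by induction on the length: cancellations are locally confluent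
  up to swaps, and swaps can be pushed past cancellations.\<close>

lemma cancel_nf_unique_if_smaller:
  assumes IH: "\<And>u u' y y'. length u < length w \<Longrightarrow> swap_equiv u u' \<Longrightarrow>
                  cancel_nf u y \<Longrightarrow> cancel_nf u' y' \<Longrightarrow> swap_equiv y y'"
    and h1: "cancel_nf w z1" and h2: "cancel_nf w z2"
  shows "swap_equiv z1 z2"
proof (cases "cancel_free E w")
  case True
  then show ?thesis using h1 h2 by (simp add: cancel_nf_of_cancel_free)
next
  case False
  obtain w1 where w1: "cancel_step E w w1" "cancel_nf w1 z1" using cancel_nf_first_step[OF h1 False] by blast
  obtain w2 where w2: "cancel_step E w w2" "cancel_nf w2 z2" using cancel_nf_first_step[OF h2 False] by blast
  have l: "length w1 < length w" "length w2 < length w"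
    using cancel_step_length w1(1) w2(1) by fastforce+
  consider (equal) "w1 = w2" | (swap) "swap_equiv w1 w2" | (swap_back) "swap_equiv w2 w1"
    | (join) w3 where "cancel_step E w1 w3" "cancel_step E w2 w3"
    using cancel_step_local_confluence[OF w1(1) w2(1)] by blast
  then show ?thesis
  proof cases
    case swap_back
    then show ?thesis using IH[OF l(2) swap_back w2(2) w1(2)] by (simp add: swap_equiv_sym)
  next
    case (join w3)
    obtain z3 where z3: "cancel_nf w3 z3" using ex_cancel_nf by blast
    have "swap_equiv z1 z3" "swap_equiv z2 z3"
      using IH[OF l(1) _ w1(2) cancel_nf_cancel_step[OF join(1) z3]]
        IH[OF l(2) _ w2(2) cancel_nf_cancel_step[OF join(2) z3]] by simp_all
    then show ?thesis using swap_equiv_sym by (meson rtranclp_trans)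
  qed (use IH[OF l(1) _ w1(2) w2(2)] in simp_all)
qed

lemma cancel_nf_swap_equiv:
  "swap_equiv w w' \<Longrightarrow> cancel_nf w z \<Longrightarrow> cancel_nf w' z' \<Longrightarrow> swap_equiv z z'"
proof (induction "length w" arbitrary: w w' z z' rule: less_induct)
  case less
  note t = less.prems(1) and h1 = less.prems(2) and h2 = less.prems(3)
  show ?case
  proof (cases "cancel_free E w")
    case True
    then have "z = w" "z' = w'"
      using h1 h2 swap_equiv_cancel_free[OF t] by (simp_all add: cancel_nf_of_cancel_free)
    then show ?thesis using t by simp
  next
    case False
    obtain w1 where w1: "cancel_step E w w1" "cancel_nf w1 z" using cancel_nf_first_step[OF h1 False] by blast
    obtain w1' where w1': "cancel_step E w' w1'" "swap_equiv w1 w1'"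
      using swap_equiv_cancel_step[OF t w1(1)] by blast
    obtain z'' where z'': "cancel_nf w1' z''" using ex_cancel_nf by blast
    have "length w1 < length w" using cancel_step_length[OF w1(1)] by linarith
    then have "swap_equiv z z''" by (rule less.hyps[OF _ w1'(2) w1(2) z''])
    moreover have "swap_equiv z'' z'"
    proof (rule cancel_nf_unique_if_smaller[OF _ cancel_nf_cancel_step[OF w1'(1) z''] h2])
      show "swap_equiv y y'"
        if "length y0 < length w'" "swap_equiv y0 y0'" "cancel_nf y0 y" "cancel_nf y0' y'" for y0 y0' y y'
        using less.hyps[of y0 y0' y y'] that swap_equiv_length[OF t] by simp
    qed
    ultimately show ?thesis by (meson rtranclp_trans)
  qed
qed

lemma cancel_step_pair: "cancel_step E (xs @ [(a, s), (a, \<not> s)] @ ys) (xs @ ys)"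
proof -
  let ?w = "xs @ [(a, s), (a, \<not> s)] @ ys"
  have "cancel_pair E ?w (length xs) (Suc (length xs))" by (simp add: cancel_pair_def nth_append)
  moreover have "del_pair ?w (length xs) (Suc (length xs)) = xs @ ys" by (simp add: del_pair_def)
  ultimately show ?thesis unfolding cancel_step_def by metis
qed

lemma raag_step_cancel_nf:
  assumes "raag_step E u w" "cancel_nf u z" "cancel_nf w z'"
  shows "swap_equiv z z'"
  using assms(1)
proof cases
  case (cancel xs a s ys)
  then have "cancel_nf u z'" using cancel_nf_cancel_step[OF cancel_step_pair[of xs a s ys]] assms(3) by simp
  then show ?thesis using cancel_nf_swap_equiv[OF _ assms(2)] by blast
next
  case (commute a b xs s t ys)
  then have "swap_equiv u w" using swap_stepI[of "(a, s)" "(b, t)" xs ys] by auto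
  then show ?thesis using cancel_nf_swap_equiv assms(2,3) by blast
qed

theorem raag_equiv_cancel_nf:
  "raag_equiv E u w \<Longrightarrow> cancel_nf u z \<Longrightarrow> cancel_nf w z' \<Longrightarrow> swap_equiv z z'"
proof (induction arbitrary: z' rule: equivclp_induct)
  case base
  then show ?case by (blast intro: cancel_nf_swap_equiv)
next
  case (step y x)
  obtain m where m: "cancel_nf y m" using ex_cancel_nf by blast
  have "swap_equiv m z'"
    using step.hyps(2) raag_step_cancel_nf[OF _ m step.prems(2)] raag_step_cancel_nf[OF _ step.prems(2) m]
      swap_equiv_sym by blast
  then show ?case using step.IH[OF step.prems(1) m] by (meson rtranclp_trans)
qed

lemma swap_step_raag_step:
  assumes "swap_step E u w" shows "raag_step E u w"
proof -
  obtain p x y q where "u = p @ [x, y] @ q" "w = p @ [y, x] @ q" "E (fst x) (fst y)"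
    using assms by (rule swap_stepE)
  then show ?thesis using raag_step.commute[of E "fst x" "fst y" p "snd x" "snd y" q] by simp
qed

lemma swap_equiv_raag_equiv: "swap_equiv u w \<Longrightarrow> raag_equiv E u w"
  by (induction rule: rtranclp_induct) (auto intro: equivclp_into_equivclp swap_step_raag_step)

lemma raag_equiv_move:
  "\<forall>y\<in>set M. E (fst x) (fst y) \<Longrightarrow> raag_equiv E (P @ [x] @ M @ Q) (P @ M @ [x] @ Q)"
  using swap_equiv_move swap_equiv_raag_equiv by blast

lemma cancel_step_raag_equiv:
  assumes "cancel_step E w w'" shows "raag_equiv E w w'"
proof -
  obtain i j where "cancel_pair E w i j" "w' = del_pair w i j"
    using assms by (auto simp: cancel_step_def)
  then obtain P x M Q where w: "w = P @ [x] @ M @ word_inv [x] @ Q" and w': "w' = P @ M @ Q"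
    and M: "\<forall>y\<in>set M. E (fst x) (fst y)"
    by (metis cancel_pairE)
  obtain a s where x: "x = (a, s)" by (cases x)
  have "raag_equiv E w (P @ M @ [x] @ (word_inv [x] @ Q))"
    unfolding w using raag_equiv_move[OF M] by simp
  also have "raag_equiv E \<dots> ((P @ M) @ Q)"
    using raag_equiv_cancel[of E "P @ M" a s Q] x by simp
  finally show ?thesis using w' by simp
qed

lemma cancel_step_subseq:
  assumes "cancel_step E w w'" shows "subseq w' w"
proof -
  obtain i j where "cancel_pair E w i j" "w' = del_pair w i j"
    using assms by (auto simp: cancel_step_def)
  then obtain P x M Q where "w = P @ [x] @ M @ word_inv [x] @ Q" "w' = P @ M @ Q"
    by (metis cancel_pairE)
  moreover have "subseq Q (word_inv [x] @ Q)"
    by (rule subseq_drop_many[OF subseq_order.order_refl])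
  then have "subseq (M @ Q) ([x] @ M @ word_inv [x] @ Q)"
    by (rule subseq_drop_many[of "M @ Q" "M @ word_inv [x] @ Q", unfolded subseq_append'])
  ultimately show ?thesis by (simp add: subseq_append')
qed

theorem cancel_free_reduced:
  assumes "w \<in> words V" "cancel_free E w"
  shows "reduced V E w"
proof -
  have "length w \<le> length u" if "raag_equiv E w u" for u
  proof -
    obtain z where z: "cancel_nf u z" using ex_cancel_nf by blast
    have "swap_equiv w z"
      using raag_equiv_cancel_nf[OF that _ z] assms(2) by (simp add: cancel_nf_of_cancel_free)
    moreover have "length z \<le> length u"
      using cancel_steps_length z unfolding cancel_nf_def by fastforce
    ultimately show ?thesis by (simp add: swap_equiv_length)
  qed
  then show ?thesis using assms(1) by (simp add: reduced_def raag_rel_def)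
qed

end

section \<open>Conjugates of a letter\<close>

definition restrict_word :: "'v set \<Rightarrow> 'v word \<Rightarrow> 'v word" where
  "restrict_word S w = filter (\<lambda>y. fst y \<in> S) w"

lemma subseq_set: "subseq xs ys \<Longrightarrow> set xs \<subseteq> set ys"
  by (auto elim: list_emb_set)

lemma Cons_eq_snoc_set: "x # F = F @ [x] \<Longrightarrow> set F \<subseteq> {x}"
  by (induction F) auto

context simple_graph
begin

lemma swap_step_restrict_word:
  assumes "swap_step E u w" and "\<And>a b. a \<in> S \<Longrightarrow> b \<in> S \<Longrightarrow> \<not> E a b"
  shows "restrict_word S u = restrict_word S w"
proof -
  obtain p x y q where "u = p @ [x, y] @ q" "w = p @ [y, x] @ q" "E (fst x) (fst y)"
    using assms(1) by (rule swap_stepE)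
  then show ?thesis using assms(2) by (auto simp: restrict_word_def)
qed

lemma swap_equiv_restrict_word:
  assumes "swap_equiv u w" and "\<And>a b. a \<in> S \<Longrightarrow> b \<in> S \<Longrightarrow> \<not> E a b"
  shows "restrict_word S u = restrict_word S w"
  using assms(1)
proof (induction rule: rtranclp_induct)
  case (step y z)
  then show ?case using swap_step_restrict_word[OF step.hyps(2) assms(2)] by simp
qed simp

text \<open>Restricting to the letters of two non-adjacent vertices is invariant under swaps,
  so a letter \<open>l\<close> can only be swapped past letters that are adjacent to it or equal to it.\<close>

lemma swap_equiv_pass_letter:
  assumes PQ: "\<forall>y\<in>set P \<union> set Q. E (fst l) (fst y)"
    and t: "swap_equiv (P @ D @ [l] @ Q) (P @ [l] @ D @ Q)"
  shows "\<forall>y\<in>set D. E (fst l) (fst y) \<or> y = l"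
proof
  fix y assume y: "y \<in> set D"
  show "E (fst l) (fst y) \<or> y = l"
  proof (rule ccontr)
    assume ny: "\<not> (E (fst l) (fst y) \<or> y = l)"
    let ?S = "{fst l, fst y}"
    have nonadj: "\<not> E a b" if "a \<in> ?S" "b \<in> ?S" for a b
      using that ny irrefl sym by auto
    have "fst z \<notin> ?S" if "z \<in> set P \<union> set Q" for z
    proof -
      from PQ that have "E (fst l) (fst z)" by blast
      then show ?thesis using ny irrefl by auto
    qed
    then have "restrict_word ?S P = []" "restrict_word ?S Q = []"
      by (auto simp: restrict_word_def filter_empty_conv)
    moreover have "restrict_word ?S (P @ D @ [l] @ Q) = restrict_word ?S (P @ [l] @ D @ Q)"
      by (rule swap_equiv_restrict_word[OF t nonadj])
    ultimately have "l # restrict_word ?S D = restrict_word ?S D @ [l]"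
      by (simp add: restrict_word_def)
    then have "set (restrict_word ?S D) \<subseteq> {l}" by (rule Cons_eq_snoc_set)
    moreover have "y \<in> set (restrict_word ?S D)" using y by (simp add: restrict_word_def)
    ultimately show False using ny by auto
  qed
qed

lemma cancel_free_single_cancel:
  assumes W: "cancel_free E W" and e: "raag_equiv E Z W" and len: "length Z = Suc (Suc (length W))"
  shows "\<exists>i j. cancel_pair E Z i j \<and> swap_equiv (del_pair Z i j) W"
proof -
  obtain z where z: "cancel_nf Z z" using ex_cancel_nf by blast
  have zW: "swap_equiv z W"
    using raag_equiv_cancel_nf[OF e z] W by (simp add: cancel_nf_of_cancel_free)
  then have lz: "length W = length z" by (rule swap_equiv_length)
  have "(cancel_step E)\<^sup>*\<^sup>* Z z" using z by (simp add: cancel_nf_def)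
  then obtain Z1 where Z1: "cancel_step E Z Z1" "(cancel_step E)\<^sup>*\<^sup>* Z1 z"
    using lz len by (cases rule: converse_rtranclpE) auto
  have "length Z1 = length W" using cancel_step_length[OF Z1(1)] len by simp
  then have "z = Z1" using cancel_steps_length[OF Z1(2)] lz by (elim disjE) simp_all
  then show ?thesis using Z1(1) zW by (auto simp: cancel_step_def)
qed

text \<open>If the generator \<open>a\<close> commutes with a cancel-free word \<open>W\<close>, then \<open>a W a\<^sup>-\<^sup>1\<close> needs exactly one
  cancellation, which must use an outer letter; every letter of \<open>W\<close> it passes is adjacent to \<open>a\<close>
  or a copy of the cancelled letter.\<close>

lemma cancel_free_commute_letter:
  assumes W: "cancel_free E W" and comm: "raag_equiv E ([(a, True)] @ W) (W @ [(a, True)])"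
  shows "(\<forall>y\<in>set W. E a (fst y) \<or> y = (a, False)) \<or> (\<forall>y\<in>set W. E a (fst y) \<or> y = (a, True))"
proof -
  define Z where "Z = [(a, True)] @ W @ [(a, False)]"
  have "raag_equiv E Z (W @ [(a, True)] @ [(a, False)])"
    unfolding Z_def using raag_equiv_append[OF comm equivclp_refl[of _ "[(a, False)]"]] by simp
  also have "raag_equiv E \<dots> W" using raag_equiv_cancel[of E W a True "[]"] by simp
  finally obtain i j where "cancel_pair E Z i j" "swap_equiv (del_pair Z i j) W"
    using cancel_free_single_cancel[OF W] Z_def by fastforce
  then obtain P x M Q where Z: "Z = P @ [x] @ M @ word_inv [x] @ Q"
    and M: "\<forall>y\<in>set M. E (fst x) (fst y)" and t: "swap_equiv (P @ M @ Q) W"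
    by (metis cancel_pairE)
  have XW: "(a, True) # W @ [(a, False)] = P @ [x] @ M @ word_inv [x] @ Q"
    using Z by (simp add: Z_def)
  consider (outer) "P = []" "Q = []" | (left) Q' where "P = []" "Q = Q' @ [(a, False)]"
    | (right) P' where "P = (a, True) # P'" "Q = []"
    | (inner) P' Q' where "P = (a, True) # P'" "Q = Q' @ [(a, False)]"
    using XW by (cases P; cases Q rule: rev_cases) auto
  then show ?thesis
  proof cases
    case outer
    then have "x = (a, True)" "W = M" using XW by (auto simp: word_inv_single_eq)
    then show ?thesis using M by auto
  next
    case (left Q')
    then have x: "x = (a, True)" and W_eq: "W = M @ [(a, False)] @ Q'" using XW by auto
    have "\<forall>y\<in>set Q'. E a (fst y) \<or> y = (a, False)"
      using swap_equiv_pass_letter[of M "[]" "(a, False)" Q'] t M x left W_eq by simp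
    then show ?thesis using M x W_eq by auto
  next
    case (right P')
    obtain b t where bt: "x = (b, t)" by (cases x)
    have "W @ [(a, False)] = (P' @ [x] @ M) @ [(b, \<not> t)]" using XW right bt by simp
    then have "W = P' @ [x] @ M" "(a, False) = (b, \<not> t)" by (metis append1_eq_conv)+
    then have x: "x = (a, True)" and W_eq: "W = P' @ [(a, True)] @ M" using bt by auto
    have "\<forall>y\<in>set P'. E a (fst y) \<or> y = (a, True)"
      using swap_equiv_pass_letter[of "[]" M "(a, True)" P'] swap_equiv_sym[OF t] M x right W_eq by simp
    then show ?thesis using M x W_eq by auto
  next
    case (inner P' Q')
    then have "W = P' @ [x] @ M @ word_inv [x] @ Q'" using XW by simp
    then show ?thesis using W not_cancel_free[OF M] by simp
  qed
qed

theorem cancel_free_conj_centraliser: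
  assumes "cancel_free E (u @ [l] @ word_inv u)"
    and "raag_equiv E ([(a, True)] @ u @ [l] @ word_inv u) ((u @ [l] @ word_inv u) @ [(a, True)])"
  shows "\<forall>y\<in>set u. E a (fst y)"
proof
  fix y assume y: "y \<in> set u"
  obtain b s where y_eq: "y = (b, s)" by (cases y)
  have mem: "(b, s) \<in> set (u @ [l] @ word_inv u)" "(b, \<not> s) \<in> set (u @ [l] @ word_inv u)"
    using y y_eq by (auto simp: in_set_word_inv)
  from cancel_free_commute_letter[OF assms] show "E a (fst y)"
  proof
    assume H: "\<forall>y\<in>set (u @ [l] @ word_inv u). E a (fst y) \<or> y = (a, False)"
    show ?thesis using H[rule_format, OF mem(1)] H[rule_format, OF mem(2)] y_eq by auto
  next
    assume H: "\<forall>y\<in>set (u @ [l] @ word_inv u). E a (fst y) \<or> y = (a, True)"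
    show ?thesis using H[rule_format, OF mem(1)] H[rule_format, OF mem(2)] y_eq by auto
  qed
qed

lemma raag_equiv_letters_commute:
  assumes "fst x = fst l \<or> E (fst x) (fst l)"
  shows "raag_equiv E ([x] @ [l]) ([l] @ [x])"
proof -
  obtain a s b t where x: "x = (a, s)" and l: "l = (b, t)" by (cases x, cases l)
  show ?thesis
  proof (cases "E a b")
    case True
    then show ?thesis using raag_equiv_commute[of E a b "[]" s t "[]"] x l by simp
  next
    case False
    then have b: "b = a" using assms x l by simp
    show ?thesis
    proof (cases "t = s")
      case False
      then have t: "t = (\<not> s)" by auto
      have "raag_equiv E ([x] @ [l]) []" "raag_equiv E ([l] @ [x]) []"
        using raag_equiv_cancel[of E "[]" a s "[]"] raag_equiv_cancel[of E "[]" a "\<not> s" "[]"] x l b t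
        by simp_all
      then show ?thesis by (meson equivclp_sym equivclp_trans)
    qed (use x l b in simp)
  qed
qed

lemma raag_equiv_conj_remove_letter:
  assumes S: "\<forall>y\<in>set S. E (fst x) (fst y)" and xl: "fst x = fst l \<or> E (fst x) (fst l)"
  shows "raag_equiv E ((P @ [x] @ S) @ [l] @ word_inv (P @ [x] @ S)) ((P @ S) @ [l] @ word_inv (P @ S))"
proof -
  obtain a s where x: "x = (a, s)" by (cases x)
  have S': "\<forall>y\<in>set (word_inv S). E (fst x) (fst y)"
    using S by (metis fst_set_word_inv image_iff)
  have "raag_equiv E ((P @ [x] @ S) @ [l] @ word_inv (P @ [x] @ S))
      (P @ S @ [x] @ ([l] @ word_inv S @ [(a, \<not> s)] @ word_inv P))"
    using raag_equiv_move[OF S, of P "[l] @ word_inv S @ [(a, \<not> s)] @ word_inv P"] x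
    by (simp add: word_inv_Cons)
  also have "raag_equiv E \<dots> ((P @ S) @ ([x] @ [l]) @ word_inv S @ [(a, \<not> s)] @ word_inv P)"
    by simp
  also have "raag_equiv E \<dots> ((P @ S) @ ([l] @ [x]) @ word_inv S @ [(a, \<not> s)] @ word_inv P)"
    by (rule raag_equiv_in_context[OF raag_equiv_letters_commute[OF xl]])
  also have "raag_equiv E \<dots> ((P @ S @ [l]) @ [x] @ word_inv S @ ([(a, \<not> s)] @ word_inv P))"
    by simp
  also have "raag_equiv E \<dots> ((P @ S @ [l]) @ word_inv S @ [x] @ ([(a, \<not> s)] @ word_inv P))"
    by (rule raag_equiv_move[OF S'])
  also have "raag_equiv E \<dots> ((P @ S @ [l] @ word_inv S) @ word_inv P)"
    using raag_equiv_cancel[of E "P @ S @ [l] @ word_inv S" a s "word_inv P"] x by simp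
  finally show ?thesis by simp
qed

text \<open>Such a letter \<open>x\<close> can be moved to the end of \<open>u\<close> and past the centre, so it can be deleted
  from the conjugate \<open>u (c, s) u\<^sup>-\<^sup>1\<close> (\<open>raag_equiv_conj_remove_letter\<close>).\<close>

definition deletable_letter :: "'v \<Rightarrow> 'v word \<Rightarrow> bool" where
  "deletable_letter c u \<longleftrightarrow>
     (\<exists>P x S. u = P @ [x] @ S \<and> (\<forall>y\<in>set S. E (fst x) (fst y)) \<and> (fst x = c \<or> E (fst x) c))"

lemma conj_cancel_pair_left:
  assumes c: "cancel_pair E (u @ [l] @ word_inv u) i j" and i: "i < length u"
  shows "\<not> cancel_free E u \<or> deletable_letter (fst l) u"
proof -
  obtain P x M Q where W: "u @ [l] @ word_inv u = P @ [x] @ M @ word_inv [x] @ Q"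
    and P: "length P = i" and M: "\<forall>y\<in>set M. E (fst x) (fst y)"
    using c by (metis cancel_pairE)
  obtain a s where x: "x = (a, s)" by (cases x)
  define R where "R = drop (Suc i) u"
  have "take i u = P" "u ! i = x"
    using arg_cong[OF W, of "take i"] arg_cong[OF W, of "\<lambda>w. w ! i"] P i by (simp_all add: nth_append)
  then have u: "u = P @ [x] @ R"
    using id_take_nth_drop[OF i] R_def by simp
  then have "R @ [l] @ word_inv u = M @ [(a, \<not> s)] @ Q"
    using W x by simp
  then obtain us where
    "R = M @ us \<and> us @ [l] @ word_inv u = [(a, \<not> s)] @ Q \<or> R @ us = M \<and> [l] @ word_inv u = us @ [(a, \<not> s)] @ Q"
    by (auto simp: append_eq_append_conv2)
  then show ?thesis
  proof (elim disjE conjE)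
    assume R: "R = M @ us" and rest: "us @ [l] @ word_inv u = [(a, \<not> s)] @ Q"
    show ?thesis
    proof (cases us)
      case Nil
      then show ?thesis using rest u R M x by (auto simp: deletable_letter_def)
    next
      case (Cons y us')
      then have "u = P @ [x] @ M @ word_inv [x] @ us'" using rest u R x by simp
      then show ?thesis using not_cancel_free[OF M] by auto
    qed
  next
    assume R: "R @ us = M" and rest: "[l] @ word_inv u = us @ [(a, \<not> s)] @ Q"
    have "fst l = a \<or> l \<in> set M" using rest R by (cases us) auto
    then show ?thesis
      unfolding deletable_letter_def using u R M x by (intro disjI2 exI[of _ P] exI[of _ x] exI[of _ R]) auto
  qed
qed

lemma conj_not_cancel_free:
  assumes "\<not> cancel_free E (u @ [l] @ word_inv u)"
  shows "\<not> cancel_free E u \<or> deletable_letter (fst l) u"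
proof -
  obtain i j where c: "cancel_pair E (u @ [l] @ word_inv u) i j"
    using assms by (auto simp: cancel_free_def)
  show ?thesis
  proof (cases "i < length u")
    case True
    then show ?thesis by (rule conj_cancel_pair_left[OF c])
  next
    case False
    obtain b t where l: "l = (b, t)" by (cases l)
    obtain P x M Q where W: "u @ [l] @ word_inv u = P @ [x] @ M @ word_inv [x] @ Q"
      and P: "length P = i" and M: "\<forall>y\<in>set M. E (fst x) (fst y)"
      using c by (metis cancel_pairE)
    have "length Q < length u"
      using arg_cong[OF W, of length] P False by simp
    \<comment> \<open>Inverting the word mirrors the pair into the left half of \<open>u (b, \<not> t) u\<^sup>-\<^sup>1\<close>.\<close>
    moreover have "cancel_pair E (u @ [(b, \<not> t)] @ word_inv u) (length Q) (Suc (length Q + length M))"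
    proof -
      have "\<forall>y\<in>set (word_inv M). E (fst x) (fst y)"
        using M by (metis fst_set_word_inv image_iff)
      moreover obtain c r where x: "x = (c, r)" by (cases x)
      then have "u @ [(b, \<not> t)] @ word_inv u = word_inv Q @ [x] @ word_inv M @ word_inv [x] @ word_inv P"
        using arg_cong[OF W, of word_inv] l by (simp add: word_inv_Cons)
      ultimately show ?thesis using cancel_pairI[of "word_inv M" x "word_inv Q" "word_inv P"] by simp
    qed
    ultimately show ?thesis
      using conj_cancel_pair_left[of u "(b, \<not> t)"] l by simp
  qed
qed

theorem conj_cancel_free_subseq:
  "\<exists>u'. subseq u' u \<and> cancel_free E (u' @ [l] @ word_inv u') \<and>
        raag_equiv E (u @ [l] @ word_inv u) (u' @ [l] @ word_inv u')"
proof (induction "length u" arbitrary: u rule: less_induct)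
  case less
  have shorter: ?case
    if "length u1 < length u" "subseq u1 u" "raag_equiv E (u @ [l] @ word_inv u) (u1 @ [l] @ word_inv u1)"
    for u1
    using less.hyps[OF that(1)] that(2,3) by (meson equivclp_trans subseq_order.order_trans)
  show ?case
  proof (cases "cancel_free E (u @ [l] @ word_inv u)")
    case True
    show ?thesis by (intro exI[of _ u] conjI subseq_order.order_refl True equivclp_refl)
  next
    case False
    from conj_not_cancel_free[OF False] show ?thesis
    proof
      assume "\<not> cancel_free E u"
      then obtain u1 where u1: "cancel_step E u u1" by (auto simp: cancel_free_iff)
      have e: "raag_equiv E u u1" by (rule cancel_step_raag_equiv[OF u1])
      have "raag_equiv E (u @ [l] @ word_inv u) (u1 @ [l] @ word_inv u1)"
        by (rule raag_equiv_append[OF e raag_equiv_append[OF equivclp_refl raag_equiv_word_inv[OF e sym]]])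
      moreover have "length u1 < length u" using cancel_step_length[OF u1] by linarith
      ultimately show ?thesis
        using shorter[of u1] cancel_step_subseq[OF u1] by blast
    next
      assume "deletable_letter (fst l) u"
      then obtain P x S where u: "u = P @ [x] @ S" and S: "\<forall>y\<in>set S. E (fst x) (fst y)"
        and xl: "fst x = fst l \<or> E (fst x) (fst l)"
        unfolding deletable_letter_def by blast
      have "subseq (P @ S) u"
        unfolding u subseq_append' by (rule subseq_drop_many[OF subseq_order.order_refl])
      then show ?thesis
        using shorter[of "P @ S"] raag_equiv_conj_remove_letter[OF S xl] u by simp
    qed
  qed
qed

lemma conj_commuting_with_letter:
  assumes "raag_equiv E ([(a, True)] @ g @ [l] @ word_inv g) ((g @ [l] @ word_inv g) @ [(a, True)])"
  shows "\<exists>u. subseq u g \<and> (\<forall>y\<in>set u. E a (fst y)) \<and> cancel_free E (u @ [l] @ word_inv u) \<and>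
             raag_equiv E (g @ [l] @ word_inv g) (u @ [l] @ word_inv u)"
proof -
  obtain u where u: "subseq u g" "cancel_free E (u @ [l] @ word_inv u)"
    and e: "raag_equiv E (g @ [l] @ word_inv g) (u @ [l] @ word_inv u)"
    using conj_cancel_free_subseq by blast
  have "raag_equiv E ([(a, True)] @ u @ [l] @ word_inv u) ((u @ [l] @ word_inv u) @ [(a, True)])"
    using raag_equiv_append[OF equivclp_refl e, of "[(a, True)]"] raag_equiv_append[OF e equivclp_refl]
      assms by (meson equivclp_sym equivclp_trans)
  then show ?thesis using cancel_free_conj_centraliser[OF u(2)] u e by blast
qed

section \<open>Conjugating automorphisms fixing a vertex\<close>

lemma conjugating_aut_fixed_neighbour:
  assumes f: "conjugating_aut V E f" "f (raag_gen V E v1) = raag_gen V E v1"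
    and e: "E v1 v2" and V: "v1 \<in> V" "v2 \<in> V"
  shows "\<exists>u\<in>words V. (\<forall>y\<in>set u. E v1 (fst y)) \<and> cancel_free E (u @ [(v2, True)] @ word_inv u) \<and>
           f (raag_gen V E v2) = raag_class V E (u @ [(v2, True)] @ word_inv u)"
proof -
  obtain g where g: "g \<in> words V" and fg: "f (raag_gen V E v2) = raag_class V E (g @ [(v2, True)] @ word_inv g)"
    using conjugating_aut_gen[OF f(1) V(2)] by blast
  have "raag_equiv E ([(v1, True)] @ g @ [(v2, True)] @ word_inv g) ((g @ [(v2, True)] @ word_inv g) @ [(v1, True)])"
    using conjugating_aut_adjacent_commute[OF f(1) e V, of "[(v1, True)]" "g @ [(v2, True)] @ word_inv g"]
      f(2) fg g V
    by (simp add: raag_gen_def)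
  then obtain u where u: "subseq u g" "\<forall>y\<in>set u. E v1 (fst y)" "cancel_free E (u @ [(v2, True)] @ word_inv u)"
    and e: "raag_equiv E (g @ [(v2, True)] @ word_inv g) (u @ [(v2, True)] @ word_inv u)"
    using conj_commuting_with_letter by blast
  have "u \<in> words V" using g subseq_set[OF u(1)] by (auto simp: words_iff)
  then show ?thesis using u e fg g V by (auto simp: raag_class_eq_iff)
qed

lemma conjugating_aut_fixed_path:
  assumes f: "conjugating_aut V E f" "f (raag_gen V E v1) = raag_gen V E v1"
    and e: "E v1 v2" "E v2 v3" and V: "v1 \<in> V" "v2 \<in> V" "v3 \<in> V"
  shows "\<exists>x\<in>words V. \<exists>y\<in>words V. (\<forall>z\<in>set x. E v1 (fst z)) \<and> (\<forall>z\<in>set y. E v2 (fst z)) \<and>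
           cancel_free E (x @ y @ [(v3, True)] @ word_inv y @ word_inv x) \<and>
           f (raag_gen V E v3) = raag_class V E (x @ y @ [(v3, True)] @ word_inv y @ word_inv x)"
proof -
  obtain u where u: "u \<in> words V" "\<forall>y\<in>set u. E v1 (fst y)"
    and fu: "f (raag_gen V E v2) = raag_class V E (u @ [(v2, True)] @ word_inv u)"
    using conjugating_aut_fixed_neighbour[OF f e(1) V(1,2)] by blast
  obtain g where g: "g \<in> words V" and fg: "f (raag_gen V E v3) = raag_class V E (g @ [(v3, True)] @ word_inv g)"
    using conjugating_aut_gen[OF f(1) V(3)] by blast
  define h where "h = word_inv u @ g"
  have h_conj: "h @ [(v3, True)] @ word_inv h = word_inv u @ (g @ [(v3, True)] @ word_inv g) @ u"
    by (simp add: h_def)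
  have "raag_equiv E ((u @ [(v2, True)] @ word_inv u) @ (g @ [(v3, True)] @ word_inv g))
                     ((g @ [(v3, True)] @ word_inv g) @ (u @ [(v2, True)] @ word_inv u))"
    using conjugating_aut_adjacent_commute[OF f(1) e(2) V(2,3), of "u @ [(v2, True)] @ word_inv u"
        "g @ [(v3, True)] @ word_inv g"] fu fg u g V by simp
  then have "raag_equiv E ([(v2, True)] @ h @ [(v3, True)] @ word_inv h) ((h @ [(v3, True)] @ word_inv h) @ [(v2, True)])"
    unfolding h_conj by (rule raag_equiv_commute_unconjugate)
  then obtain u3 where u3: "subseq u3 h" "\<forall>y\<in>set u3. E v2 (fst y)"
    and e3: "raag_equiv E (h @ [(v3, True)] @ word_inv h) (u3 @ [(v3, True)] @ word_inv u3)"
    using conj_commuting_with_letter by blast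
  have "raag_equiv E (g @ [(v3, True)] @ word_inv g) (u @ (h @ [(v3, True)] @ word_inv h) @ word_inv u)"
    using raag_equiv_conj_cancel[of E "word_inv u" "g @ [(v3, True)] @ word_inv g"] h_conj
    by (simp add: equivclp_sym)
  also have "raag_equiv E \<dots> ((u @ u3) @ [(v3, True)] @ word_inv (u @ u3))"
    using raag_equiv_in_context[OF e3, of u "word_inv u"] by simp
  finally obtain w where w: "subseq w (u @ u3)" "cancel_free E (w @ [(v3, True)] @ word_inv w)"
    and ew: "raag_equiv E (g @ [(v3, True)] @ word_inv g) (w @ [(v3, True)] @ word_inv w)"
    using conj_cancel_free_subseq[of "u @ u3" "(v3, True)"] by (meson equivclp_trans)
  obtain x y where xy: "w = x @ y" "subseq x u" "subseq y u3"
    using w(1) by (rule subseq_appendE)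
  have "h \<in> words V" using u g by (simp add: h_def)
  then have "x \<in> words V" "y \<in> words V"
    using u(1) subseq_set[OF xy(2)] subseq_set[OF u3(1)] subseq_set[OF xy(3)]
    unfolding words_iff by (meson image_mono order_trans)+
  moreover have "(\<forall>z\<in>set x. E v1 (fst z)) \<and> (\<forall>z\<in>set y. E v2 (fst z))"
    using u(2) u3(2) subseq_set[OF xy(2)] subseq_set[OF xy(3)] by blast
  ultimately show ?thesis
    using w(2) ew fg g V xy(1) by (auto simp: raag_class_eq_iff)
qed

end

theorem lemma5p3:
  fixes V :: "'v set" and E :: "'v \<Rightarrow> 'v \<Rightarrow> bool" and v1 v2 v3 :: 'v
    and f :: "'v word set \<Rightarrow> 'v word set"
  assumes "simplicial_graph V E"
    and "v1 \<in> V" "v2 \<in> V" "v3 \<in> V"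
    and "E v1 v2" "E v2 v3"
    and "graph_dist V E v1 v3 = 2"
    and "conjugating_aut V E f"
    and "f (raag_gen V E v1) = raag_gen V E v1"
  shows "(\<exists>w \<in> words V.
            raag_class V E w \<in> generate (RAAG V E) (raag_gen V E ` lk V E v1) \<and>
            reduced V E (w @ [(v2, True)] @ word_inv w) \<and>
            raag_class V E (w @ [(v2, True)] @ word_inv w) = f (raag_gen V E v2))
       \<and> (\<exists>x \<in> words V. \<exists>y \<in> words V.
            raag_class V E x \<in> generate (RAAG V E) (raag_gen V E ` lk V E v1) \<and>
            raag_class V E y \<in> generate (RAAG V E) (raag_gen V E ` st V E v2) \<and>
            reduced V E (x @ y @ [(v3, True)] @ word_inv y @ word_inv x) \<and>
            raag_class V E (x @ y @ [(v3, True)] @ word_inv y @ word_inv x) = f (raag_gen V E v3))"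
proof -
  interpret simple_graph E
    using assms(1) by unfold_locales (auto simp: simplicial_graph_def)
  have lk: "raag_class V E w \<in> generate (RAAG V E) (raag_gen V E ` lk V E v)"
    if "\<forall>z\<in>set w. E v (fst z)" for w v
    using that assms(1) by (intro raag_class_in_generate) (auto simp: lk_def simplicial_graph_def)
  have st: "raag_class V E w \<in> generate (RAAG V E) (raag_gen V E ` st V E v)"
    if "\<forall>z\<in>set w. E v (fst z)" "v \<in> V" for w v
    using that assms(1) by (intro raag_class_in_generate) (auto simp: st_def lk_def simplicial_graph_def)
  obtain w where w: "w \<in> words V" "\<forall>z\<in>set w. E v1 (fst z)" "cancel_free E (w @ [(v2, True)] @ word_inv w)"
    "f (raag_gen V E v2) = raag_class V E (w @ [(v2, True)] @ word_inv w)"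
    using conjugating_aut_fixed_neighbour[OF assms(8,9,5,2,3)] by blast
  obtain x y where xy: "x \<in> words V" "y \<in> words V" "\<forall>z\<in>set x. E v1 (fst z)" "\<forall>z\<in>set y. E v2 (fst z)"
    "cancel_free E (x @ y @ [(v3, True)] @ word_inv y @ word_inv x)"
    "f (raag_gen V E v3) = raag_class V E (x @ y @ [(v3, True)] @ word_inv y @ word_inv x)"
    using conjugating_aut_fixed_path[OF assms(8,9,5,6,2,3,4)] by blast
  have "reduced V E (w @ [(v2, True)] @ word_inv w)"
    "reduced V E (x @ y @ [(v3, True)] @ word_inv y @ word_inv x)"
    using w(1,3) xy(1,2,5) assms(3,4) by (simp_all add: cancel_free_reduced)
  then show ?thesis
    using w xy lk[OF w(2)] lk[OF xy(3)] st[OF xy(4) assms(3)] by auto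
qed

end
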